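(* Let $N\in\mathbb{N}$. Let $$\mathcal{B}(N)=\{(q_1,q_2)\in\mathbb{Z}^2\mid 3q_1^2+3q_2^2-2q_1-q_2=N\},$$ let $\mathcal{U}(12N+5)=\{(x,y)\in\mathbb{Z}^2\mid x^2+y^2=12N+5\}$, and let $\varphi:\mathcal{B}(N)\to\mathcal{U}(12N+5)$ be the (well-defined) map $\varphi(q_1,q_2)=(6q_1-2,\,6q_2-1)$. Let the dihedral group $D_8=\langle r,s\mid r^4=s^2=(rs)^2=1\rangle$ act on $\mathcal{U}(12N+5)$ by $r(x,y)=(-y,x)$ and $s(x,y)=(y,x)$. Then: (1) the action of $D_8$ on $\mathcal{U}(12N+5)$ is free; (2) $\varphi(\mathcal{B}(N))$ is a complete set of representatives of the $D_8$-orbits of $\mathcal{U}(12N+5)$.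
   Context: The expression $3q_1^2+3q_2^2-2q_1-q_2$ is the $\Lambda_0$-atomic length of the element $q=\sqrt2q_1\varepsilon_1+\sqrt2q_2\varepsilon_2$ of the lattice $M$ in affine type $D_3^{(2)}$, so $\mathcal{B}(N)$ parametrises the affine Grassmannian elements of type $D_3^{(2)}$ of atomic length $N$. *)

theory Defs
  imports Main
begin

definition Bset :: "nat \<Rightarrow> (int \<times> int) set" where
  "Bset N = {(q1, q2). 3*q1^2 + 3*q2^2 - 2*q1 - q2 = int N}"

definition Uset :: "int \<Rightarrow> (int \<times> int) set" where
  "Uset m = {(x, y). x^2 + y^2 = m}"

definition phi :: "int \<times> int \<Rightarrow> int \<times> int" where
  "phi q = (6 * fst q - 2, 6 * snd q - 1)"

definition rot :: "int \<times> int \<Rightarrow> int \<times> int" where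
  "rot p = (- snd p, fst p)"

definition refl :: "int \<times> int \<Rightarrow> int \<times> int" where
  "refl p = (snd p, fst p)"

text \<open>The group D8 generated by r and s, acting on Z^2 (the action is faithful on Z^2).\<close>
inductive_set D8 :: "(int \<times> int \<Rightarrow> int \<times> int) set" where
  D8_id: "id \<in> D8"
| D8_r: "g \<in> D8 \<Longrightarrow> rot \<circ> g \<in> D8"
| D8_s: "g \<in> D8 \<Longrightarrow> refl \<circ> g \<in> D8"

end

theory Submission
  imports Defs
begin

text \<open>
  Since \<open>x\<^sup>2 + y\<^sup>2 \<equiv> 5 (mod 12)\<close>, neither coordinate of a point of
  \<open>U(12N+5)\<close> is divisible by 3 and exactly one of them is even. So both are nonzero and
  of different absolute value, which makes the action of the signed permutations in \<open>D\<^sub>8\<close> free.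
  The image of \<open>\<phi>\<close> consists of the points congruent to \<open>(4, 5)\<close> modulo 6: even first
  and odd second coordinate, each with a prescribed residue modulo 3. In the orbit
  \<open>{(\<plusminus>x, \<plusminus>y), (\<plusminus>y, \<plusminus>x)}\<close> parity fixes the order of the coordinates and the
  residue modulo 3 fixes each sign, so exactly one orbit element lies in the image of \<open>\<phi>\<close>.
\<close>

definition signflip :: "int \<Rightarrow> int \<Rightarrow> int \<times> int \<Rightarrow> int \<times> int" where
  "signflip a b = (\<lambda>(x, y). (a * x, b * y))"

lemma signflip_apply [simp]: "signflip a b (x, y) = (a * x, b * y)"
  by (simp add: signflip_def)

lemma abs_eq_1_cases:
  fixes a :: int
  assumes "\<bar>a\<bar> = 1"
  obtains "a = 1" | "a = -1"
  using assms by linarith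

lemma rot_in_D8: "rot \<in> D8"
  using D8_r[OF D8_id] by simp

lemma refl_in_D8: "refl \<in> D8"
  using D8_s[OF D8_id] by simp

lemma D8_comp: "g \<in> D8 \<Longrightarrow> h \<in> D8 \<Longrightarrow> g \<circ> h \<in> D8"
  by (induction rule: D8.induct) (auto simp: comp_assoc intro: D8.intros)

lemma D8_inverse:
  assumes "g \<in> D8"
  shows "\<exists>g'\<in>D8. g' \<circ> g = id"
  using assms
proof (induction rule: D8.induct)
  case D8_id
  show ?case using D8.D8_id by (metis comp_id)
next
  case (D8_r g)
  then obtain g' where "g' \<in> D8" "g' \<circ> g = id" by blast
  moreover have "rot \<circ> rot \<circ> rot \<circ> rot = id"
    by (simp add: fun_eq_iff rot_def)
  ultimately have "g' \<circ> (rot \<circ> rot \<circ> rot) \<circ> (rot \<circ> g) = id"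
    by (metis comp_assoc comp_id)
  moreover have "g' \<circ> (rot \<circ> rot \<circ> rot) \<in> D8"
    using \<open>g' \<in> D8\<close> by (intro D8_comp rot_in_D8)
  ultimately show ?case by blast
next
  case (D8_s g)
  then obtain g' where "g' \<in> D8" "g' \<circ> g = id" by blast
  moreover have "refl \<circ> refl = id"
    by (simp add: fun_eq_iff refl_def)
  ultimately have "g' \<circ> refl \<circ> (refl \<circ> g) = id"
    by (metis comp_assoc comp_id)
  moreover have "g' \<circ> refl \<in> D8"
    using \<open>g' \<in> D8\<close> by (intro D8_comp refl_in_D8)
  ultimately show ?case by blast
qed

lemma signflip_in_D8:
  assumes "\<bar>a\<bar> = 1" "\<bar>b\<bar> = 1"
  shows "signflip a b \<in> D8"
proof -
  have "signflip 1 1 = id" "signflip (-1) 1 = rot \<circ> refl"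
    "signflip 1 (-1) = refl \<circ> rot" "signflip (-1) (-1) = rot \<circ> rot"
    by (auto simp: fun_eq_iff rot_def refl_def)
  then show ?thesis
    using D8_id D8_comp[OF rot_in_D8 refl_in_D8] D8_comp[OF refl_in_D8 rot_in_D8]
      D8_comp[OF rot_in_D8 rot_in_D8]
    by (cases rule: abs_eq_1_cases[OF assms(1)]; cases rule: abs_eq_1_cases[OF assms(2)]) metis+
qed

lemma D8_iff:
  "g \<in> D8 \<longleftrightarrow>
    (\<exists>a b. \<bar>a\<bar> = 1 \<and> \<bar>b\<bar> = 1 \<and> (g = signflip a b \<or> g = signflip a b \<circ> refl))"
proof
  assume "g \<in> D8"
  then show "\<exists>a b. \<bar>a\<bar> = 1 \<and> \<bar>b\<bar> = 1 \<and> (g = signflip a b \<or> g = signflip a b \<circ> refl)"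
  proof (induction rule: D8.induct)
    case D8_id
    have "id = signflip 1 1" by (simp add: fun_eq_iff)
    then show ?case by (metis abs_one)
  next
    case (D8_r g)
    have "rot \<circ> signflip a b = signflip (-b) a \<circ> refl"
      "rot \<circ> (signflip a b \<circ> refl) = signflip (-b) a" for a b
      by (auto simp: fun_eq_iff rot_def refl_def)
    with D8_r.IH show ?case by (metis abs_minus_cancel)
  next
    case (D8_s g)
    have "refl \<circ> signflip a b = signflip b a \<circ> refl"
      "refl \<circ> (signflip a b \<circ> refl) = signflip b a" for a b
      by (auto simp: fun_eq_iff refl_def)
    with D8_s.IH show ?case by metis
  qed
next
  assume "\<exists>a b. \<bar>a\<bar> = 1 \<and> \<bar>b\<bar> = 1 \<and> (g = signflip a b \<or> g = signflip a b \<circ> refl)"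
  then show "g \<in> D8"
    using signflip_in_D8 D8_comp refl_in_D8 by blast
qed

lemma D8_preserves_Uset: "g \<in> D8 \<Longrightarrow> u \<in> Uset m \<Longrightarrow> g u \<in> Uset m"
  by (induction rule: D8.induct) (auto simp: Uset_def rot_def refl_def add.commute)

lemma D8_fixpoint_imp_id:
  assumes "g \<in> D8" "g (x, y) = (x, y)" "x \<noteq> 0" "y \<noteq> 0" "\<bar>x\<bar> \<noteq> \<bar>y\<bar>"
  shows "g = id"
proof -
  obtain a b where ab: "\<bar>a\<bar> = 1" "\<bar>b\<bar> = 1" and "g = signflip a b \<or> g = signflip a b \<circ> refl"
    using assms(1) D8_iff by blast
  then consider "g = signflip a b" | "g = signflip a b \<circ> refl" by blast
  then show ?thesis
  proof cases
    case 1
    with assms(2-4) have "a = 1" "b = 1" by auto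
    then show ?thesis using 1 by (simp add: fun_eq_iff)
  next
    case 2
    with assms(2) have "x = a * y" by (simp add: refl_def)
    then have "\<bar>x\<bar> = \<bar>y\<bar>" using ab by (simp add: abs_mult)
    with assms(5) show ?thesis by blast
  qed
qed

lemma sum_squares_mod_12:
  fixes x y :: int
  assumes "(x^2 + y^2) mod 12 = 5"
  shows "\<not> 3 dvd x" "\<not> 3 dvd y" "odd (x + y)"
proof -
  have "(x^2 + y^2) mod 3 = 2"
    using assms mod_mod_cancel[of 3 12 "x^2 + y^2"] by simp
  then have "((x mod 3)^2 + (y mod 3)^2) mod 3 = 2"
    by (metis mod_add_eq power_mod)
  moreover have "x mod 3 \<in> {0, 1, 2}" "y mod 3 \<in> {0, 1, 2}" by auto
  ultimately have "x mod 3 \<noteq> 0" "y mod 3 \<noteq> 0"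
    by (auto simp: power2_eq_square)
  then show "\<not> 3 dvd x" "\<not> 3 dvd y" by auto
  have "(x^2 + y^2) mod 2 = 1"
    using assms mod_mod_cancel[of 2 12 "x^2 + y^2"] by simp
  then show "odd (x + y)" by (simp flip: odd_iff_mod_2_eq_one)
qed

lemma range_phi: "range phi = {v. fst v mod 6 = 4 \<and> snd v mod 6 = 5}"
proof (intro set_eqI iffI)
  fix v assume "v \<in> range phi"
  then show "v \<in> {v. fst v mod 6 = 4 \<and> snd v mod 6 = 5}"
    by (auto simp: phi_def) presburger+
next
  fix v :: "int \<times> int" assume "v \<in> {v. fst v mod 6 = 4 \<and> snd v mod 6 = 5}"
  then have "v = phi ((fst v + 2) div 6, (snd v + 1) div 6)"
    by (simp add: phi_def prod_eq_iff) presburger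
  then show "v \<in> range phi" by blast
qed

lemma phi_in_Uset_iff: "phi q \<in> Uset (12 * int N + 5) \<longleftrightarrow> q \<in> Bset N"
proof -
  obtain q1 q2 where q: "q = (q1, q2)" by fastforce
  define n where "n = 3*q1^2 + 3*q2^2 - 2*q1 - q2"
  have "(6*q1 - 2)^2 + (6*q2 - 1)^2 = 12 * n + 5"
    by (simp add: n_def power2_eq_square algebra_simps)
  then have "phi q \<in> Uset (12 * int N + 5) \<longleftrightarrow> n = int N"
    by (simp add: q phi_def Uset_def)
  then show ?thesis by (simp add: q n_def Bset_def)
qed

lemma phi_image_Bset: "phi ` Bset N = range phi \<inter> Uset (12 * int N + 5)"
  using phi_in_Uset_iff by blast

lemma D8_image_in_range_phi_eq:
  assumes "k \<in> D8" "v \<in> range phi" "k v \<in> range phi"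
  shows "k v = v"
proof -
  obtain x y where v: "v = (x, y)" by fastforce
  with assms(2) have x: "x mod 6 = 4" and y: "y mod 6 = 5" by (simp_all add: range_phi)
  obtain a b where ab: "\<bar>a\<bar> = 1" "\<bar>b\<bar> = 1" and "k = signflip a b \<or> k = signflip a b \<circ> refl"
    using assms(1) D8_iff by blast
  then consider "k = signflip a b" | "k = signflip a b \<circ> refl" by blast
  then show ?thesis
  proof cases
    case 1
    with assms(3) v have "(a * x) mod 6 = 4" "(b * y) mod 6 = 5" by (simp_all add: range_phi)
    with x y have "a = 1" "b = 1"
      by (cases rule: abs_eq_1_cases[OF ab(1)]; cases rule: abs_eq_1_cases[OF ab(2)]; presburger)+
    with 1 v show ?thesis by simp
  next
    case 2
    with assms(3) v have "(a * y) mod 6 = 4" by (simp add: range_phi refl_def)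
    with y have False
      by (cases rule: abs_eq_1_cases[OF ab(1)]) (simp_all, presburger)
    then show ?thesis ..
  qed
qed

lemma even_sign_mod_6:
  fixes t :: int
  assumes "even t" "\<not> 3 dvd t"
  obtains a where "\<bar>a\<bar> = 1" "(a * t) mod 6 = 4"
proof -
  have "t mod 6 = 4 \<or> (- t) mod 6 = 4" using assms by presburger
  then show ?thesis using that[of 1] that[of "-1"] by auto
qed

lemma odd_sign_mod_6:
  fixes t :: int
  assumes "odd t" "\<not> 3 dvd t"
  obtains a where "\<bar>a\<bar> = 1" "(a * t) mod 6 = 5"
proof -
  have "t mod 6 = 5 \<or> (- t) mod 6 = 5" using assms by presburger
  then show ?thesis using that[of 1] that[of "-1"] by auto
qed

lemma signflip_into_range_phi:
  assumes "even x" "odd y" "\<not> 3 dvd x" "\<not> 3 dvd y"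
  obtains a b where "\<bar>a\<bar> = 1" "\<bar>b\<bar> = 1" "signflip a b (x, y) \<in> range phi"
proof -
  obtain a where a: "\<bar>a\<bar> = 1" "(a * x) mod 6 = 4"
    using even_sign_mod_6 assms(1,3) by blast
  obtain b where b: "\<bar>b\<bar> = 1" "(b * y) mod 6 = 5"
    using odd_sign_mod_6 assms(2,4) by blast
  show ?thesis using that[OF a(1) b(1)] a(2) b(2) by (simp add: range_phi)
qed

lemma D8_orbit_meets_range_phi:
  assumes "\<not> 3 dvd x" "\<not> 3 dvd y" "odd (x + y)"
  shows "\<exists>g\<in>D8. g (x, y) \<in> range phi"
proof (cases "even x")
  case True
  with assms(3) have "odd y" by simp
  obtain a b where "\<bar>a\<bar> = 1" "\<bar>b\<bar> = 1" "signflip a b (x, y) \<in> range phi"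
    using signflip_into_range_phi[OF True \<open>odd y\<close> assms(1,2)] .
  then show ?thesis using signflip_in_D8 by blast
next
  case False
  with assms(3) have "even y" by simp
  obtain a b where ab: "\<bar>a\<bar> = 1" "\<bar>b\<bar> = 1" "signflip a b (y, x) \<in> range phi"
    using signflip_into_range_phi[OF \<open>even y\<close> False assms(2,1)] .
  then have "(signflip a b \<circ> refl) (x, y) \<in> range phi" by (simp add: refl_def)
  moreover have "signflip a b \<circ> refl \<in> D8"
    using D8_comp[OF signflip_in_D8[OF ab(1,2)] refl_in_D8] .
  ultimately show ?thesis by blast
qed

lemma Uset_residues:
  assumes "(x, y) \<in> Uset (12 * n + 5)"
  shows "\<not> 3 dvd x" "\<not> 3 dvd y" "odd (x + y)"
proof -
  from assms have "(x^2 + y^2) mod 12 = 5" by (simp add: Uset_def)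
  then show "\<not> 3 dvd x" "\<not> 3 dvd y" "odd (x + y)" by (fact sum_squares_mod_12)+
qed

lemma D8_free_on_Uset:
  assumes "g \<in> D8" "u \<in> Uset (12 * n + 5)" "g u = u"
  shows "g = id"
proof -
  obtain x y where xy: "u = (x, y)" by fastforce
  from assms(2) have "\<not> 3 dvd x" "\<not> 3 dvd y" "odd (x + y)"
    unfolding xy by (fact Uset_residues)+
  then have "x \<noteq> 0" "y \<noteq> 0" "\<bar>x\<bar> \<noteq> \<bar>y\<bar>" by (auto simp: abs_eq_iff)
  with assms(1,3) show ?thesis unfolding xy by (rule D8_fixpoint_imp_id)
qed

lemma D8_orbit_range_phi_unique:
  assumes "g \<in> D8" "h \<in> D8" "g u \<in> range phi" "h u \<in> range phi"
  shows "h u = g u"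
proof -
  obtain g' where g': "g' \<in> D8" "g' \<circ> g = id" using D8_inverse[OF assms(1)] by blast
  then have hu: "h u = (h \<circ> g') (g u)" by (metis comp_apply id_apply)
  with assms(4) have "(h \<circ> g') (g u) \<in> range phi" by simp
  with D8_image_in_range_phi_eq[OF D8_comp[OF assms(2) g'(1)] assms(3)] hu show ?thesis
    by simp
qed

theorem theorem8p17:
  fixes N :: nat
  shows "phi ` Bset N \<subseteq> Uset (12 * int N + 5)
    \<and> (\<forall>g\<in>D8. \<forall>u\<in>Uset (12 * int N + 5). g u = u \<longrightarrow> g = id)
    \<and> (\<forall>u\<in>Uset (12 * int N + 5). \<exists>!v. v \<in> phi ` Bset N \<and> (\<exists>g\<in>D8. g u = v))"
proof (intro conjI ballI impI)
  show "phi ` Bset N \<subseteq> Uset (12 * int N + 5)" by (simp add: phi_image_Bset)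
next
  fix g u assume "g \<in> D8" "u \<in> Uset (12 * int N + 5)" "g u = u"
  then show "g = id" by (rule D8_free_on_Uset)
next
  fix u assume u: "u \<in> Uset (12 * int N + 5)"
  obtain x y where xy: "u = (x, y)" by fastforce
  from u have "\<not> 3 dvd x" "\<not> 3 dvd y" "odd (x + y)" unfolding xy by (fact Uset_residues)+
  then obtain g where g: "g \<in> D8" "g u \<in> range phi"
    unfolding xy using D8_orbit_meets_range_phi by blast
  show "\<exists>!v. v \<in> phi ` Bset N \<and> (\<exists>g\<in>D8. g u = v)"
  proof (rule ex1I)
    show "g u \<in> phi ` Bset N \<and> (\<exists>h\<in>D8. h u = g u)"
      using g D8_preserves_Uset[OF g(1) u] by (auto simp: phi_image_Bset)
  next
    fix v assume "v \<in> phi ` Bset N \<and> (\<exists>h\<in>D8. h u = v)"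
    then obtain h where "h \<in> D8" "h u = v" "v \<in> range phi" by (auto simp: phi_image_Bset)
    with g show "v = g u" using D8_orbit_range_phi_unique by blast
  qed
qed

end
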